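(* If the special tuples $(Y,y)$ and $(Y',y')$ are equivalent, then the first coordinates of $y$ and $y'$ with respect to the standard basis $e_1,\dots,e_{n+2}$ coincide: $y'_1=y_1$.
   Context: Let $n\ge 0$ be an integer and let $\widetilde K$ be a real symmetric $n\times n$ matrix with $\widetilde K^2=I_n$. Let $V=\mathbb R^{n+2}$ with standard basis $e_1,\dots,e_{n+2}$, and let $K=\begin{pmatrix}0&0&1\\0&\widetilde K&0\\1&0&0\end{pmatrix}$ (block sizes $1,n,1$). For $x,w\in V$ write $x^*=x^TK$ and $L_{u,w}=u\,w^*-w\,u^*$. Let $O(V,K)=\{P:P^TKP=K\}$, $\mathfrak o(V,K)=\{X:X^TK+KX=0\}$, $O(V,K)_{e_{n+2}}=\{P\in O(V,K):Pe_{n+2}=e_{n+2}\}$. A special tuple is a pair $(Y,y)$ with $Y\in\mathfrak o(V,K)$, $y\in V$. Two special tuples $(Y,y)$ and $(Y',y')$ are equivalent if there exist $P\in O(V,K)_{e_{n+2}}$, vectors $v,p\in V$ with $p^*(e_{n+2})=0$, and $v_0\in\mathbb R$ such that $Y'+L_{v,e_{n+2}}=P(Y+L_{p,y})P^{-1}$ and $y'=Py+v_0e_{n+2}$. *)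

theory Defs
  imports "Jordan_Normal_Form.Matrix"
begin

text \<open>V = R^(n+2) is modelled by real vec of dimension n+2; the standard basis vector
  e_k (1-based in the paper) is unit_vec (n+2) (k-1) (0-based indices here).\<close>

definition Kmat :: "nat \<Rightarrow> real mat \<Rightarrow> real mat" where
  "Kmat n Kt = mat (n+2) (n+2) (\<lambda>(i,j).
     if i = 0 \<and> j = n+1 then 1
     else if i = n+1 \<and> j = 0 then 1
     else if 1 \<le> i \<and> i \<le> n \<and> 1 \<le> j \<and> j \<le> n then Kt $$ (i-1, j-1)
     else 0)"

text \<open>x^* = x^T K, represented as the column vector K^T x; x^*(w) = x^T K w.\<close>
definition star_vec :: "real mat \<Rightarrow> real vec \<Rightarrow> real vec" where
  "star_vec K x = transpose_mat K *\<^sub>v x"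

definition star_app :: "real mat \<Rightarrow> real vec \<Rightarrow> real vec \<Rightarrow> real" where
  "star_app K x w = star_vec K x \<bullet> w"

definition outer :: "real vec \<Rightarrow> real vec \<Rightarrow> real mat" where
  "outer u w = mat (dim_vec u) (dim_vec w) (\<lambda>(i,j). u $ i * w $ j)"

definition Lmap :: "real mat \<Rightarrow> real vec \<Rightarrow> real vec \<Rightarrow> real mat" where
  "Lmap K u w = outer u (star_vec K w) - outer w (star_vec K u)"

definition orth_group :: "nat \<Rightarrow> real mat \<Rightarrow> real mat set" where
  "orth_group N K = {P \<in> carrier_mat N N. transpose_mat P * K * P = K}"

definition orth_alg :: "nat \<Rightarrow> real mat \<Rightarrow> real mat set" where
  "orth_alg N K = {X \<in> carrier_mat N N. transpose_mat X * K + K * X = 0\<^sub>m N N}"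

definition stab_group :: "nat \<Rightarrow> real mat \<Rightarrow> real mat set" where
  "stab_group n K = {P \<in> orth_group (n+2) K. P *\<^sub>v unit_vec (n+2) (n+1) = unit_vec (n+2) (n+1)}"

definition special_tuple :: "nat \<Rightarrow> real mat \<Rightarrow> real mat \<Rightarrow> real vec \<Rightarrow> bool" where
  "special_tuple n K Y y \<longleftrightarrow> Y \<in> orth_alg (n+2) K \<and> y \<in> carrier_vec (n+2)"

text \<open>P^{-1} is expressed through an explicit two-sided inverse Q (unique when it exists).\<close>
definition equiv_tuple ::
  "nat \<Rightarrow> real mat \<Rightarrow> real mat \<Rightarrow> real vec \<Rightarrow> real mat \<Rightarrow> real vec \<Rightarrow> bool" where
  "equiv_tuple n K Y y Y' y' \<longleftrightarrow>
     (\<exists>P Q v p v0. P \<in> stab_group n K \<and> Q \<in> carrier_mat (n+2) (n+2) \<and>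
        P * Q = 1\<^sub>m (n+2) \<and> Q * P = 1\<^sub>m (n+2) \<and>
        v \<in> carrier_vec (n+2) \<and> p \<in> carrier_vec (n+2) \<and>
        star_app K p (unit_vec (n+2) (n+1)) = 0 \<and>
        Y' + Lmap K v (unit_vec (n+2) (n+1)) = P * (Y + Lmap K p y) * Q \<and>
        y' = P *\<^sub>v y + v0 \<cdot>\<^sub>v unit_vec (n+2) (n+1))"

end

theory Submission
  imports Defs
begin

(* An element P of the stabiliser of e_{n+2} preserves the form K and fixes e_{n+2}, so its
   transpose fixes K e_{n+2} = e_1. Hence the first row of P is e_1^T, i.e. P leaves the first
   coordinate unchanged; adding a multiple of e_{n+2} does not touch it either. *)

lemma orth_group_transpose_fixes_form_vec:
  fixes K P :: "real mat"
  assumes P: "P \<in> orth_group N K" and K: "K \<in> carrier_mat N N"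
    and w: "w \<in> carrier_vec N" and Pw: "P *\<^sub>v w = w"
  shows "transpose_mat P *\<^sub>v (K *\<^sub>v w) = K *\<^sub>v w"
proof -
  have Pc: "P \<in> carrier_mat N N" and PKP: "transpose_mat P * K * P = K"
    using P unfolding orth_group_def by auto
  have "transpose_mat P *\<^sub>v (K *\<^sub>v w) = transpose_mat P *\<^sub>v (K *\<^sub>v (P *\<^sub>v w))"
    using Pw by simp
  also have "\<dots> = transpose_mat P *\<^sub>v ((K * P) *\<^sub>v w)"
    using Pc K w by (simp only: assoc_mult_mat_vec)
  also have "\<dots> = (transpose_mat P * K * P) *\<^sub>v w"
    using Pc K w by (simp add: assoc_mult_mat_vec[of "transpose_mat P" N N "K * P" N])
  finally show ?thesis using PKP by simp
qed

lemma index_mult_mat_vec_if_transpose_fixes_unit_vec: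
  fixes P :: "'a :: comm_semiring_1 mat"
  assumes P: "P \<in> carrier_mat N N" and i: "i < N" and y: "y \<in> carrier_vec N"
    and fix_unit: "transpose_mat P *\<^sub>v unit_vec N i = unit_vec N i"
  shows "(P *\<^sub>v y) $ i = y $ i"
proof -
  have "(P *\<^sub>v y) $ i = unit_vec N i \<bullet> (P *\<^sub>v y)"
    using P y i by (intro scalar_prod_left_unit[symmetric]) auto
  also have "\<dots> = (transpose_mat P *\<^sub>v unit_vec N i) \<bullet> y"
    using transpose_vec_mult_scalar[OF P y] by simp
  also have "\<dots> = y $ i"
    using fix_unit y i by simp
  finally show ?thesis .
qed

lemma Kmat_carrier: "Kmat n Kt \<in> carrier_mat (n+2) (n+2)"
  unfolding Kmat_def by simp

lemma Kmat_mult_last_unit_vec: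
  "Kmat n Kt *\<^sub>v unit_vec (n+2) (n+1) = unit_vec (n+2) 0"
proof (rule eq_vecI)
  fix i assume "i < dim_vec (unit_vec (n+2) 0 :: real vec)"
  then have i: "i < n+2" by simp
  then have "(Kmat n Kt *\<^sub>v unit_vec (n+2) (n+1)) $ i = Kmat n Kt $$ (i, n+1)"
    using Kmat_carrier[of n Kt] by simp
  also have "\<dots> = unit_vec (n+2) 0 $ i"
    using i unfolding Kmat_def by auto
  finally show "(Kmat n Kt *\<^sub>v unit_vec (n+2) (n+1)) $ i = unit_vec (n+2) 0 $ i" .
qed (simp add: Kmat_def)

lemma stab_group_Kmat_fixes_first_coord:
  assumes P: "P \<in> stab_group n (Kmat n Kt)" and y: "y \<in> carrier_vec (n+2)"
  shows "(P *\<^sub>v y) $ 0 = y $ 0"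
proof -
  have orth: "P \<in> orth_group (n+2) (Kmat n Kt)"
    and fix_last: "P *\<^sub>v unit_vec (n+2) (n+1) = unit_vec (n+2) (n+1)"
    using P unfolding stab_group_def by auto
  have fix_first: "transpose_mat P *\<^sub>v unit_vec (n+2) 0 = unit_vec (n+2) 0"
    using orth_group_transpose_fixes_form_vec[OF orth Kmat_carrier unit_vec_carrier fix_last]
    by (simp only: Kmat_mult_last_unit_vec)
  have "P \<in> carrier_mat (n+2) (n+2)"
    using orth unfolding orth_group_def by simp
  from index_mult_mat_vec_if_transpose_fixes_unit_vec[OF this _ y fix_first]
  show ?thesis by simp
qed

theorem lemma5:
  fixes n :: nat and Kt Y Y' :: "real mat" and y y' :: "real vec"
  assumes "Kt \<in> carrier_mat n n"
    and "transpose_mat Kt = Kt"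
    and "Kt * Kt = 1\<^sub>m n"
    and "special_tuple n (Kmat n Kt) Y y"
    and "special_tuple n (Kmat n Kt) Y' y'"
    and "equiv_tuple n (Kmat n Kt) Y y Y' y'"
  shows "y' $ 0 = y $ 0"
proof -
  have y: "y \<in> carrier_vec (n+2)"
    using assms(4) unfolding special_tuple_def by simp
  obtain P v0 where P: "P \<in> stab_group n (Kmat n Kt)"
    and y': "y' = P *\<^sub>v y + v0 \<cdot>\<^sub>v unit_vec (n+2) (n+1)"
    using assms(6) unfolding equiv_tuple_def by blast
  have "P \<in> carrier_mat (n+2) (n+2)"
    using P unfolding stab_group_def orth_group_def by simp
  then show ?thesis
    using y' y stab_group_Kmat_fixes_first_coord[OF P y] by simp
qed

end
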